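(* Let $T$ and $U$ be session types with $\Delta\vdash T:\mathsf{s}^m$ and $\Delta\vdash U:\mathsf{s}^m$ satisfying the standing assumptions below. Then $T$ and $U$ are type bisimilar ($T\simeq U$) if and only if the BPA processes $\llbracket T\rrbracket$ and $\llbracket U\rrbracket$ are bisimilar with respect to some system of process equations $\mathcal{E}^*$ with $\mathcal{E}_{T\cdot U}\subseteq\mathcal{E}^*$.
   Context: Session types: $T ::= \mathsf{Skip} \mid {!}B \mid {?}B \mid \oplus\{\ell:T_\ell\}_{\ell\in L} \mid \&\{\ell:T_\ell\}_{\ell\in L} \mid T;T \mid \mu a{:}\kappa.T \mid a$, with kinding: $\mathsf{Skip}:\mathsf{s}^{\mathsf{un}}$; ${!}B,{?}B:\mathsf{s}^{\mathsf{lin}}$ for message types $B$; choices $:\mathsf{s}^{\mathsf{lin}}$ when all branches are; $T;U:\mathsf{s}^{\mathsf{lin}}$ when both are; $\mu a{:}\kappa.T:\kappa$ when $T$ contractive on $a$ and $\Delta,a{:}\kappa\vdash T:\kappa$; variables by lookup; subsumption. Terminated: $\mathsf{Skip}$; $T;U$ iff both terminated; $\mu a.T$ iff $T$ terminated. Contractive on $a$: $T\neq a$; for $T=U;V$, $U$ contractive on $a$ and if $U$ terminated then $V$ contractive on $a$; for $\mu b.T'$, $T'$ contractive on $a$. Standing assumptions: every $\mu$-bound variable occurs free in its body; $T$ and $U$ are $\alpha$-renamed to share no bound variables. Session-type LTS: ${!}B\xrightarrow{!B}\mathsf{Skip}$, ${?}B\xrightarrow{?B}\mathsf{Skip}$,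 $\star\{\ell:T_\ell\}\xrightarrow{\star k}T_k$, $b\xrightarrow{b}\mathsf{Skip}$ for free $b$; $\mu a.T\xrightarrow{\alpha}T'$ if $T[\mu a.T/a]\xrightarrow{\alpha}T'$; $T;U\xrightarrow{\alpha}T';U$ if $T\xrightarrow{\alpha}T'$; $T;U\xrightarrow{\alpha}U'$ if $T$ terminated and $U\xrightarrow{\alpha}U'$. Type bisimilarity $\simeq$ is the largest bisimulation on this LTS. BPA processes $p ::= \alpha \mid X \mid p+p \mid p\cdot p \mid \varepsilon$; LTS over equations $\mathcal E$: $\alpha\xrightarrow{\alpha}\varepsilon$; choice takes a transition of either summand; $p\cdot q\xrightarrow{\alpha}p'\cdot q$ if $p\xrightarrow{\alpha}p'\ne\varepsilon$; $p\cdot q\xrightarrow{\alpha}q$ if $p\xrightarrow{\alpha}\varepsilon$; $X\xrightarrow{\alpha}p'$ if $X\triangleq p\in\mathcal E$ and $p\xrightarrow{\alpha}p'$; BPA bisimilarity w.r.t. $\mathcal E$ is the largest bisimulation on it. Operator $\odot$: $p\odot\varepsilon=p$, $\varepsilon\odot q=q$, else $p\cdot q$. Translation (each $\mu$-subterm $\mu a_i.T_i$ gets a distinct variable $X_i$): $\llbracket\mathsf{Skip}\rrbracket=\varepsilon$, $\llbracket\sharp B\rrbracket=\sharp B$, $\llbracket\star\{\ell:T_\ell\}\rrbracket=\sum_\ell\star\ell\odot\llbracket T_\ell\rrbracket$, $\llbracket T;U\rrbracket=\llbracket T\rrbracket\odot\llbracket U\rrbracket$, $\llbracket b\rrbracket=b$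 for free $b$, $\llbracket a_i\rrbracket=\llbracket\mu a_i.T_i\rrbracket=X_i$. Unravel: $\mathrm{unr}_\sigma(T;U)=\mathrm{unr}_\sigma(U)$ if $\mathrm{unr}_\sigma(T)=\mathsf{Skip}$, else $\mathrm{unr}_\sigma(T);U$; $\mathrm{unr}_\sigma(\mu a.T)=\mathrm{unr}_{\sigma\circ[\mu a.T/a]}(T)$; $\mathrm{unr}_\sigma(T)=T$ otherwise. $\mathcal{E}_T=\{X_i\triangleq\llbracket\mathrm{unr}_{\mathrm{id}}(T_i)\rrbracket\}_i$ over the $\mu$-subterms of $T$, and $\mathcal{E}_{T\cdot U}=\mathcal E_T\cup\mathcal E_U$. *)

theory Defs
  imports Main
begin

datatype kind = KUn | KLin

text \<open>A choice {l : T_l}_{l in L} is represented by an association list of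
  (label, branch) pairs; the kinding relation requires the labels to be
  pairwise distinct and L nonempty.\<close>
datatype ('b, 'l, 'v) styp =
    SSkip
  | SOut 'b
  | SIn 'b
  | SInt "('l \<times> ('b, 'l, 'v) styp) list"
  | SExt "('l \<times> ('b, 'l, 'v) styp) list"
  | SSeq "('b, 'l, 'v) styp" "('b, 'l, 'v) styp"
  | SMu 'v kind "('b, 'l, 'v) styp"
  | SVar 'v

fun terminated :: "('b, 'l, 'v) styp \<Rightarrow> bool" where
  "terminated SSkip = True"
| "terminated (SSeq T U) = (terminated T \<and> terminated U)"
| "terminated (SMu a k T) = terminated T"
| "terminated _ = False"

fun contractive :: "'v \<Rightarrow> ('b, 'l, 'v) styp \<Rightarrow> bool" where
  "contractive a (SVar b) = (b \<noteq> a)"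
| "contractive a (SSeq U V) = (contractive a U \<and> (terminated U \<longrightarrow> contractive a V))"
| "contractive a (SMu b k T) = contractive a T"
| "contractive a _ = True"

inductive kinding :: "('v \<Rightarrow> kind option) \<Rightarrow> ('b, 'l, 'v) styp \<Rightarrow> kind \<Rightarrow> bool" where
  k_skip: "kinding \<Delta> SSkip KUn"
| k_out: "kinding \<Delta> (SOut B) KLin"
| k_in: "kinding \<Delta> (SIn B) KLin"
| k_int: "\<lbrakk>bs \<noteq> []; distinct (map fst bs); \<forall>(l, T) \<in> set bs. kinding \<Delta> T KLin\<rbrakk>
          \<Longrightarrow> kinding \<Delta> (SInt bs) KLin"
| k_ext: "\<lbrakk>bs \<noteq> []; distinct (map fst bs); \<forall>(l, T) \<in> set bs. kinding \<Delta> T KLin\<rbrakk>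
          \<Longrightarrow> kinding \<Delta> (SExt bs) KLin"
| k_seq: "\<lbrakk>kinding \<Delta> T KLin; kinding \<Delta> U KLin\<rbrakk> \<Longrightarrow> kinding \<Delta> (SSeq T U) KLin"
| k_mu: "\<lbrakk>contractive a T; kinding (\<Delta>(a \<mapsto> \<kappa>)) T \<kappa>\<rbrakk> \<Longrightarrow> kinding \<Delta> (SMu a \<kappa> T) \<kappa>"
| k_var: "\<Delta> a = Some \<kappa> \<Longrightarrow> kinding \<Delta> (SVar a) \<kappa>"
| k_sub: "kinding \<Delta> T KUn \<Longrightarrow> kinding \<Delta> T KLin"

fun fv :: "('b, 'l, 'v) styp \<Rightarrow> 'v set" where
  "fv (SVar b) = {b}"
| "fv (SMu a k T) = fv T - {a}"
| "fv (SSeq T U) = fv T \<union> fv U"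
| "fv (SInt bs) = (\<Union>p \<in> set bs. fv (snd p))"
| "fv (SExt bs) = (\<Union>p \<in> set bs. fv (snd p))"
| "fv _ = {}"

fun binders :: "('b, 'l, 'v) styp \<Rightarrow> 'v list" where
  "binders (SMu a k T) = a # binders T"
| "binders (SSeq T U) = binders T @ binders U"
| "binders (SInt bs) = concat (map (\<lambda>p. binders (snd p)) bs)"
| "binders (SExt bs) = concat (map (\<lambda>p. binders (snd p)) bs)"
| "binders _ = []"

fun mus :: "('b, 'l, 'v) styp \<Rightarrow> ('v \<times> ('b, 'l, 'v) styp) set" where
  "mus (SMu a k T) = insert (a, T) (mus T)"
| "mus (SSeq T U) = mus T \<union> mus U"
| "mus (SInt bs) = (\<Union>p \<in> set bs. mus (snd p))"
| "mus (SExt bs) = (\<Union>p \<in> set bs. mus (snd p))"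
| "mus _ = {}"

text \<open>Substitution T[S/a] (no renaming needed under the standing assumptions).\<close>
fun subst :: "'v \<Rightarrow> ('b, 'l, 'v) styp \<Rightarrow> ('b, 'l, 'v) styp \<Rightarrow> ('b, 'l, 'v) styp" where
  "subst a S (SVar b) = (if b = a then S else SVar b)"
| "subst a S (SMu b k T) = (if b = a then SMu b k T else SMu b k (subst a S T))"
| "subst a S (SSeq T U) = SSeq (subst a S T) (subst a S U)"
| "subst a S (SInt bs) = SInt (map (\<lambda>p. (fst p, subst a S (snd p))) bs)"
| "subst a S (SExt bs) = SExt (map (\<lambda>p. (fst p, subst a S (snd p))) bs)"
| "subst a S T = T"

text \<open>Actions (shared by the session-type LTS and the BPA LTS).\<close>
datatype ('b, 'l, 'v) act = ASend 'b | ARecv 'b | AInt 'l | AExt 'l | AVar 'v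

inductive sstep :: "('b, 'l, 'v) styp \<Rightarrow> ('b, 'l, 'v) act \<Rightarrow> ('b, 'l, 'v) styp \<Rightarrow> bool" where
  s_out: "sstep (SOut B) (ASend B) SSkip"
| s_in: "sstep (SIn B) (ARecv B) SSkip"
| s_int: "(k, T) \<in> set bs \<Longrightarrow> sstep (SInt bs) (AInt k) T"
| s_ext: "(k, T) \<in> set bs \<Longrightarrow> sstep (SExt bs) (AExt k) T"
| s_var: "sstep (SVar b) (AVar b) SSkip"
| s_mu: "sstep (subst a (SMu a k T) T) \<alpha> T' \<Longrightarrow> sstep (SMu a k T) \<alpha> T'"
| s_seq1: "sstep T \<alpha> T' \<Longrightarrow> sstep (SSeq T U) \<alpha> (SSeq T' U)"
| s_seq2: "\<lbrakk>terminated T; sstep U \<alpha> U'\<rbrakk> \<Longrightarrow> sstep (SSeq T U) \<alpha> U'"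

definition is_bisim :: "('s \<Rightarrow> 'a \<Rightarrow> 's \<Rightarrow> bool) \<Rightarrow> ('s \<times> 's) set \<Rightarrow> bool" where
  "is_bisim step R \<longleftrightarrow>
     (\<forall>(p, q) \<in> R.
        (\<forall>a p'. step p a p' \<longrightarrow> (\<exists>q'. step q a q' \<and> (p', q') \<in> R)) \<and>
        (\<forall>a q'. step q a q' \<longrightarrow> (\<exists>p'. step p a p' \<and> (p', q') \<in> R)))"

definition bisimilar :: "('s \<Rightarrow> 'a \<Rightarrow> 's \<Rightarrow> bool) \<Rightarrow> 's \<Rightarrow> 's \<Rightarrow> bool" where
  "bisimilar step p q \<longleftrightarrow> (\<exists>R. is_bisim step R \<and> (p, q) \<in> R)"

definition type_bisim :: "('b, 'l, 'v) styp \<Rightarrow> ('b, 'l, 'v) styp \<Rightarrow> bool" where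
  "type_bisim T U \<longleftrightarrow> bisimilar sstep T U"

datatype ('a, 'x) proc = PAct 'a | PVar 'x | PPlus "('a, 'x) proc" "('a, 'x) proc"
  | PSeq "('a, 'x) proc" "('a, 'x) proc" | PEps

text \<open>BPA LTS w.r.t. a system of equations E (each variable has at most one defining equation).\<close>
inductive bstep :: "('x \<Rightarrow> ('a, 'x) proc option) \<Rightarrow> ('a, 'x) proc \<Rightarrow> 'a \<Rightarrow> ('a, 'x) proc \<Rightarrow> bool"
  for E where
  b_act: "bstep E (PAct a) a PEps"
| b_plus1: "bstep E p a p' \<Longrightarrow> bstep E (PPlus p q) a p'"
| b_plus2: "bstep E q a q' \<Longrightarrow> bstep E (PPlus p q) a q'"
| b_seq1: "\<lbrakk>bstep E p a p'; p' \<noteq> PEps\<rbrakk> \<Longrightarrow> bstep E (PSeq p q) a (PSeq p' q)"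
| b_seq2: "bstep E p a PEps \<Longrightarrow> bstep E (PSeq p q) a q"
| b_var: "\<lbrakk>E X = Some p; bstep E p a p'\<rbrakk> \<Longrightarrow> bstep E (PVar X) a p'"

fun odot :: "('a, 'x) proc \<Rightarrow> ('a, 'x) proc \<Rightarrow> ('a, 'x) proc" where
  "odot p PEps = p"
| "odot PEps q = q"
| "odot p q = PSeq p q"

fun bsum :: "('a, 'x) proc list \<Rightarrow> ('a, 'x) proc" where
  "bsum [] = PEps"
| "bsum [p] = p"
| "bsum (p # ps) = PPlus p (bsum ps)"

text \<open>The process variable associated with the mu-subterm mu a_i.T_i is a_i itself
  (binders are pairwise distinct by the standing assumptions). V is the set of
  bound variables of T and U; a variable occurrence a in V translates to the
  process variable X_a, a free variable b translates to the action b.\<close>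
fun tr :: "'v set \<Rightarrow> ('b, 'l, 'v) styp \<Rightarrow> (('b, 'l, 'v) act, 'v) proc" where
  "tr V SSkip = PEps"
| "tr V (SOut B) = PAct (ASend B)"
| "tr V (SIn B) = PAct (ARecv B)"
| "tr V (SInt bs) = bsum (map (\<lambda>p. odot (PAct (AInt (fst p))) (tr V (snd p))) bs)"
| "tr V (SExt bs) = bsum (map (\<lambda>p. odot (PAct (AExt (fst p))) (tr V (snd p))) bs)"
| "tr V (SSeq T U) = odot (tr V T) (tr V U)"
| "tr V (SVar b) = (if b \<in> V then PVar b else PAct (AVar b))"
| "tr V (SMu a k T) = PVar a"

text \<open>Unravelling. The substitution index sigma of the paper is never applied by
  any defining clause, so it is omitted.\<close>
fun unr :: "('b, 'l, 'v) styp \<Rightarrow> ('b, 'l, 'v) styp" where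
  "unr (SSeq T U) = (if unr T = SSkip then unr U else SSeq (unr T) U)"
| "unr (SMu a k T) = unr T"
| "unr T = T"

definition eqs :: "'v set \<Rightarrow> ('b, 'l, 'v) styp \<Rightarrow> ('v \<times> (('b, 'l, 'v) act, 'v) proc) set" where
  "eqs V T = {(a, tr V (unr B)) | a B. (a, B) \<in> mus T}"

definition standing :: "('b, 'l, 'v) styp \<Rightarrow> ('b, 'l, 'v) styp \<Rightarrow> bool" where
  "standing T U \<longleftrightarrow>
     (\<forall>(a, B) \<in> mus T \<union> mus U. a \<in> fv B) \<and>
     distinct (binders T @ binders U) \<and>
     set (binders T @ binders U) \<inter> (fv T \<union> fv U) = {}"

end

(*
  The translation is a functional bisimulation: on every type S reachable from T or U, the
  transitions of tr S are exactly the images under tr of the transitions of S.  The only delicate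
  case is recursion.  Unfolding mu a. B substitutes mu a. B for a, and mu a. B translates to the
  process variable a again, so every mu-subterm mu c. B' of a reachable type still translates like
  the original mu-subterm for c, whose equation belongs to the system.  Contractivity makes
  unfolding decrease the number of leading binders, which supplies the induction for the converse
  direction.  Bisimulations are then carried along tr in both directions, and a system containing
  all the equations exists because the binders are distinct.
*)
theory Submission
  imports Defs "HOL-Library.Product_Lexorder"
begin

lemma styp_induct [case_names SSkip SOut SIn SInt SExt SSeq SMu SVar]:
  assumes "P SSkip" "\<And>B. P (SOut B)" "\<And>B. P (SIn B)"
    and "\<And>bs. (\<And>p. p \<in> set bs \<Longrightarrow> P (snd p)) \<Longrightarrow> P (SInt bs)"
    and "\<And>bs. (\<And>p. p \<in> set bs \<Longrightarrow> P (snd p)) \<Longrightarrow> P (SExt bs)"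
    and "\<And>T U. P T \<Longrightarrow> P U \<Longrightarrow> P (SSeq T U)"
    and "\<And>a k T. P T \<Longrightarrow> P (SMu a k T)"
    and "\<And>b. P (SVar b)"
  shows "P T"
proof (induction T)
  case (SInt bs)
  then show ?case by (metis assms(4) prod.exhaust_sel snds.intros)
next
  case (SExt bs)
  then show ?case by (metis assms(5) prod.exhaust_sel snds.intros)
qed (use assms in auto)

fun nonempty_choices :: "('b, 'l, 'v) styp \<Rightarrow> bool" where
  "nonempty_choices (SInt bs) = (bs \<noteq> [] \<and> (\<forall>p \<in> set bs. nonempty_choices (snd p)))"
| "nonempty_choices (SExt bs) = (bs \<noteq> [] \<and> (\<forall>p \<in> set bs. nonempty_choices (snd p)))"
| "nonempty_choices (SSeq T U) = (nonempty_choices T \<and> nonempty_choices U)"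
| "nonempty_choices (SMu a k T) = nonempty_choices T"
| "nonempty_choices _ = True"

fun unfold_depth :: "('b, 'l, 'v) styp \<Rightarrow> nat" where
  "unfold_depth (SMu a k T) = Suc (unfold_depth T)"
| "unfold_depth (SSeq T U) = (if terminated T then unfold_depth T + unfold_depth U else unfold_depth T)"
| "unfold_depth _ = 0"

lemma tr_subst: "a \<in> V \<Longrightarrow> tr V S = PVar a \<Longrightarrow> tr V (subst a S Y) = tr V Y"
  by (induction Y rule: styp_induct) (auto cong: map_cong)

lemma fv_subst_subset: "fv (subst a S Y) \<subseteq> (fv Y - {a}) \<union> fv S"
  by (induction Y rule: styp_induct) (auto split: if_splits)

lemma fv_subset_fv_subst: "fv Y - {a} \<subseteq> fv (subst a S Y)"
  by (induction Y rule: styp_induct) auto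

lemma nonempty_choices_subst:
  "nonempty_choices S \<Longrightarrow> nonempty_choices Y \<Longrightarrow> nonempty_choices (subst a S Y)"
  by (induction Y rule: styp_induct) auto

lemma mus_subst:
  "(c, Y) \<in> mus (subst a S Z) \<Longrightarrow>
     (c, Y) \<in> mus Z \<or> (c, Y) \<in> mus S \<or> (\<exists>X. (c, X) \<in> mus Z \<and> c \<noteq> a \<and> Y = subst a S X)"
  by (induction Z rule: styp_induct) (fastforce split: if_splits)+

lemma terminated_fv: "terminated Y \<Longrightarrow> fv Y = {}"
  by (induction Y) auto

lemma terminated_subst: "\<not> terminated S \<Longrightarrow> terminated (subst a S Y) = terminated Y"
  by (induction Y) auto

lemma contractive_if_not_free:
  "c \<notin> fv Y \<Longrightarrow> \<forall>(b, X) \<in> mus Y. contractive b X \<Longrightarrow> contractive c Y"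
  by (induction Y) auto

lemma contractive_subst:
  "contractive c X \<Longrightarrow> c \<noteq> a \<Longrightarrow> contractive c S \<Longrightarrow> \<not> terminated S \<Longrightarrow> contractive c (subst a S X)"
  by (induction X) (auto simp: terminated_subst)

lemma unfold_depth_subst:
  "contractive a Y \<Longrightarrow> \<not> terminated S \<Longrightarrow> unfold_depth (subst a S Y) = unfold_depth Y"
  by (induction Y) (auto simp: terminated_subst)

lemma unr_eq_SSkip_iff: "unr Y = SSkip \<longleftrightarrow> terminated Y"
  by (induction Y rule: unr.induct) auto

lemma terminated_unr: "terminated (unr Y) = terminated Y"
  by (induction Y rule: unr.induct) (auto simp: unr_eq_SSkip_iff)

lemma nonempty_choices_unr: "nonempty_choices Y \<Longrightarrow> nonempty_choices (unr Y)"
  by (induction Y rule: unr.induct) auto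

lemma terminated_mus_empty: "terminated Y \<Longrightarrow> \<forall>(c, X) \<in> mus Y. c \<in> fv X \<Longrightarrow> mus Y = {}"
  by (induction Y) (auto dest: terminated_fv)

lemma mus_binders: "(c, X) \<in> mus T \<Longrightarrow> c \<in> set (binders T)"
  by (induction T rule: styp_induct) auto

lemma mus_mus_subset: "(c, X) \<in> mus T \<Longrightarrow> mus X \<subseteq> mus T"
  by (induction T rule: styp_induct) auto

lemma nonempty_choices_mus: "nonempty_choices T \<Longrightarrow> (c, X) \<in> mus T \<Longrightarrow> nonempty_choices X"
  by (induction T rule: styp_induct) fastforce+

lemma mus_as_list: "\<exists>xs. set xs = mus T \<and> map fst xs = binders T"
proof (induction T rule: styp_induct)
  case (SInt bs)
  then obtain f where "\<forall>p \<in> set bs. set (f p) = mus (snd p) \<and> map fst (f p) = binders (snd p)"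
    by metis
  then show ?case
    by (intro exI[of _ "concat (map f bs)"]) (simp add: map_concat cong: map_cong)
next
  case (SExt bs)
  then obtain f where "\<forall>p \<in> set bs. set (f p) = mus (snd p) \<and> map fst (f p) = binders (snd p)"
    by metis
  then show ?case
    by (intro exI[of _ "concat (map f bs)"]) (simp add: map_concat cong: map_cong)
next
  case (SSeq T U)
  then show ?case by (metis map_append set_append mus.simps(2) binders.simps(2))
next
  case (SMu a k T)
  then obtain xs where "set xs = mus T" "map fst xs = binders T" by blast
  then show ?case by (intro exI[of _ "(a, T) # xs"]) simp
qed simp_all

lemma kinding_nonempty_choices: "kinding \<Delta> T \<kappa> \<Longrightarrow> nonempty_choices T"
  by (induction rule: kinding.induct) fastforce+

lemma kinding_mus_contractive: "kinding \<Delta> T \<kappa> \<Longrightarrow> \<forall>(c, X) \<in> mus T. contractive c X"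
  by (induction rule: kinding.induct) fastforce+

context
  fixes step :: "'s \<Rightarrow> 'a \<Rightarrow> 's \<Rightarrow> bool" and step' :: "'t \<Rightarrow> 'a \<Rightarrow> 't \<Rightarrow> bool"
    and f :: "'s \<Rightarrow> 't" and P :: "'s \<Rightarrow> bool"
  assumes invariant: "\<And>s a s'. step s a s' \<Longrightarrow> P s \<Longrightarrow> P s'"
    and image_steps: "\<And>s a r. P s \<Longrightarrow> step' (f s) a r \<longleftrightarrow> (\<exists>s'. step s a s' \<and> f s' = r)"
begin

lemma is_bisim_image:
  assumes R: "is_bisim step R"
  shows "is_bisim step' {(f s1, f s2) | s1 s2. (s1, s2) \<in> R \<and> P s1 \<and> P s2}" (is "is_bisim _ ?R'")
  unfolding is_bisim_def
proof (intro ballI, clarify, intro conjI allI impI)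
  fix s1 s2 a r assume in_R: "(s1, s2) \<in> R" "P s1" "P s2"
  {
    assume "step' (f s1) a r"
    then obtain s1' where "step s1 a s1'" "f s1' = r" using image_steps in_R by blast
    moreover from this obtain s2' where "step s2 a s2'" "(s1', s2') \<in> R"
      using R in_R unfolding is_bisim_def by blast
    ultimately show "\<exists>r'. step' (f s2) a r' \<and> (r, r') \<in> ?R'"
      using image_steps invariant in_R by blast
  next
    assume "step' (f s2) a r"
    then obtain s2' where "step s2 a s2'" "f s2' = r" using image_steps in_R by blast
    moreover from this obtain s1' where "step s1 a s1'" "(s1', s2') \<in> R"
      using R in_R unfolding is_bisim_def by blast
    ultimately show "\<exists>r'. step' (f s1) a r' \<and> (r', r) \<in> ?R'"
      using image_steps invariant in_R by blast
  }
qed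

lemma is_bisim_preimage:
  assumes R': "is_bisim step' R'"
  shows "is_bisim step {(s1, s2). (f s1, f s2) \<in> R' \<and> P s1 \<and> P s2}" (is "is_bisim _ ?R")
  unfolding is_bisim_def
proof (intro ballI, clarify, intro conjI allI impI)
  fix s1 s2 a s' assume in_R: "(f s1, f s2) \<in> R'" "P s1" "P s2"
  {
    assume "step s1 a s'"
    then have "step' (f s1) a (f s')" using image_steps in_R by blast
    then obtain r where r: "step' (f s2) a r" "(f s', r) \<in> R'"
      using R' in_R unfolding is_bisim_def by blast
    obtain s'' where "step s2 a s''" "f s'' = r" using image_steps in_R r(1) by blast
    then show "\<exists>s''. step s2 a s'' \<and> (s', s'') \<in> ?R"
      using r(2) invariant in_R \<open>step s1 a s'\<close> by blast
  next
    assume "step s2 a s'"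
    then have "step' (f s2) a (f s')" using image_steps in_R by blast
    then obtain r where r: "step' (f s1) a r" "(r, f s') \<in> R'"
      using R' in_R unfolding is_bisim_def by blast
    obtain s'' where "step s1 a s''" "f s'' = r" using image_steps in_R r(1) by blast
    then show "\<exists>s''. step s1 a s'' \<and> (s'', s') \<in> ?R"
      using r(2) invariant in_R \<open>step s2 a s'\<close> by blast
  }
qed

lemma bisimilar_iff_bisimilar_image:
  assumes "P s" "P t"
  shows "bisimilar step s t \<longleftrightarrow> bisimilar step' (f s) (f t)"
proof
  assume "bisimilar step s t"
  then obtain R where "is_bisim step R" "(s, t) \<in> R" unfolding bisimilar_def by blast
  then show "bisimilar step' (f s) (f t)"
    using is_bisim_image assms unfolding bisimilar_def by blast
next
  assume "bisimilar step' (f s) (f t)"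
  then obtain R' where "is_bisim step' R'" "(f s, f t) \<in> R'" unfolding bisimilar_def by blast
  then show "bisimilar step s t"
    using is_bisim_preimage assms unfolding bisimilar_def by blast
qed

end

inductive_simps bstep_simps:
  "bstep E PEps a r" "bstep E (PAct b) a r" "bstep E (PVar X) a r"
  "bstep E (PPlus p q) a r" "bstep E (PSeq p q) a r"

inductive_simps sstep_simps:
  "sstep SSkip a r" "sstep (SOut B) a r" "sstep (SIn B) a r" "sstep (SInt bs) a r"
  "sstep (SExt bs) a r" "sstep (SVar b) a r" "sstep (SMu c k T) a r" "sstep (SSeq T U) a r"

lemma odot_PEps_left [simp]: "odot PEps q = q"
  by (cases q) auto

lemma odot_eq_PEps_iff: "odot p q = PEps \<longleftrightarrow> p = PEps \<and> q = PEps"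
  by (cases "(p, q)" rule: odot.cases) auto

lemma bstep_bsum: "ps \<noteq> [] \<Longrightarrow> bstep E (bsum ps) a r \<longleftrightarrow> (\<exists>p \<in> set ps. bstep E p a r)"
  by (induction ps rule: bsum.induct) (auto simp: bstep_simps)

lemma bsum_eq_PEps: "bsum ps = PEps \<Longrightarrow> ps = [] \<or> (\<exists>p \<in> set ps. p = PEps)"
  by (induction ps rule: bsum.induct) auto

lemma bstep_odot:
  "bstep E (odot p q) a r \<longleftrightarrow> (\<exists>p'. bstep E p a p' \<and> r = odot p' q) \<or> (p = PEps \<and> bstep E q a r)"
proof (cases "p = PEps \<or> q = PEps")
  case True
  then show ?thesis by (cases "q = PEps") (auto simp: bstep_simps)
next
  case False
  then have "odot p q = PSeq p q" by (cases "(p, q)" rule: odot.cases) auto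
  moreover have "odot p' q = (if p' = PEps then q else PSeq p' q)" for p'
    using False by (cases "(p', q)" rule: odot.cases) auto
  ultimately show ?thesis using False by (auto simp: bstep_simps)
qed

lemma bstep_bsum_prefixed:
  assumes "bs \<noteq> []"
  shows "bstep E (bsum (map (\<lambda>p. odot (PAct (f (fst p))) (g (snd p))) bs)) a r \<longleftrightarrow>
    (\<exists>(k, T) \<in> set bs. a = f k \<and> r = g T)"
  using assms by (auto simp: bstep_bsum bstep_odot bstep_simps; force)

lemma tr_neq_PEps: "\<not> terminated Y \<Longrightarrow> nonempty_choices Y \<Longrightarrow> tr V Y \<noteq> PEps"
  by (induction Y) (auto simp: odot_eq_PEps_iff eq_commute[of PEps] dest!: bsum_eq_PEps)

lemma tr_eq_PEps_iff:
  assumes "nonempty_choices Y" "\<forall>(c, X) \<in> mus Y. c \<in> fv X"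
  shows "tr V Y = PEps \<longleftrightarrow> terminated Y"
proof
  assume "terminated Y"
  then have "mus Y = {}" using assms(2) by (rule terminated_mus_empty)
  with \<open>terminated Y\<close> show "tr V Y = PEps" by (induction Y) auto
qed (use assms tr_neq_PEps in blast)

locale translation_system =
  fixes M :: "('v \<times> ('b, 'l, 'v) styp) set" and V :: "'v set"
    and E :: "'v \<Rightarrow> (('b, 'l, 'v) act, 'v) proc option"
  assumes equation: "(c, X) \<in> M \<Longrightarrow> E c = Some (tr V (unr X))"
    and binder_free: "(c, X) \<in> M \<Longrightarrow> c \<in> fv X"
    and body_nonempty_choices: "(c, X) \<in> M \<Longrightarrow> nonempty_choices X"
    and mus_closed: "(c, X) \<in> M \<Longrightarrow> mus X \<subseteq> M"
begin

lemma bstep_tr_unr: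
  "nonempty_choices Y \<Longrightarrow> mus Y \<subseteq> M \<Longrightarrow> bstep E (tr V (unr Y)) a r \<longleftrightarrow> bstep E (tr V Y) a r"
proof (induction Y arbitrary: r)
  case (SSeq T U)
  have binders_free: "\<forall>(c, X) \<in> mus T. c \<in> fv X" using SSeq.prems binder_free by auto
  show ?case
  proof (cases "terminated T")
    case True
    then have "tr V T = PEps" using SSeq.prems binders_free by (simp add: tr_eq_PEps_iff)
    then show ?thesis using True SSeq by (simp add: unr_eq_SSkip_iff)
  next
    case False
    then have "tr V T \<noteq> PEps" "tr V (unr T) \<noteq> PEps"
      using SSeq.prems by (auto simp: tr_neq_PEps terminated_unr nonempty_choices_unr)
    then show ?thesis using False SSeq by (simp add: unr_eq_SSkip_iff bstep_odot)
  qed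
qed (auto simp: bstep_simps equation)

definition admissible_mu :: "'v \<Rightarrow> ('b, 'l, 'v) styp \<Rightarrow> bool" where
  "admissible_mu c X \<longleftrightarrow> c \<in> V \<and> c \<in> fv X \<and> contractive c X \<and> (\<exists>X0. (c, X0) \<in> M \<and> tr V X = tr V X0)"

text \<open>The invariant of the types reachable from T and U: their mu-subterms are substitution
  instances of mu-subterms in M and therefore translate like them (see tr_subst).\<close>
definition admissible :: "('b, 'l, 'v) styp \<Rightarrow> bool" where
  "admissible S \<longleftrightarrow> nonempty_choices S \<and> fv S \<inter> V = {} \<and> (\<forall>(c, X) \<in> mus S. admissible_mu c X)"

lemma admissible_SSeq [simp]: "admissible (SSeq T U) \<longleftrightarrow> admissible T \<and> admissible U"
  unfolding admissible_def by auto

lemma admissible_tr_eq_PEps_iff: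
  assumes "admissible S"
  shows "tr V S = PEps \<longleftrightarrow> terminated S"
proof (rule tr_eq_PEps_iff)
  show "nonempty_choices S" "\<forall>(c, X) \<in> mus S. c \<in> fv X"
    using assms unfolding admissible_def admissible_mu_def by blast+
qed

lemma admissible_SMuD:
  assumes "admissible (SMu a k T)"
  shows "a \<in> V" "contractive a T" "\<not> terminated T" "\<exists>X0. (a, X0) \<in> M \<and> tr V T = tr V X0"
  using assms terminated_fv unfolding admissible_def admissible_mu_def by fastforce+

lemma admissible_unfold:
  assumes adm: "admissible (SMu a k T)"
  shows "admissible (subst a (SMu a k T) T)"
proof -
  let ?S = "SMu a k T"
  have mus_S: "admissible_mu c X" if "(c, X) \<in> mus ?S" for c X
    using adm that unfolding admissible_def by auto
  have "admissible_mu c Y" if cY: "(c, Y) \<in> mus (subst a ?S T)" for c Y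
  proof -
    consider "(c, Y) \<in> mus ?S" | X where "(c, X) \<in> mus T" "c \<noteq> a" "Y = subst a ?S X"
      using mus_subst[OF cY] by auto
    then show ?thesis
    proof cases
      case 1
      then show ?thesis by (rule mus_S)
    next
      case (2 X)
      then have mu_X: "admissible_mu c X" using mus_S by simp
      then have "c \<in> V" "c \<in> fv X" "contractive c X" unfolding admissible_mu_def by blast+
      have "contractive c ?S"
      proof (rule contractive_if_not_free)
        show "c \<notin> fv ?S" using adm \<open>c \<in> V\<close> unfolding admissible_def by blast
        show "\<forall>(b, Z) \<in> mus ?S. contractive b Z" using mus_S unfolding admissible_mu_def by blast
      qed
      then have "contractive c Y"
        unfolding 2(3) using \<open>contractive c X\<close> 2(2) admissible_SMuD(3)[OF adm]
        by (intro contractive_subst) simp_all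
      moreover have "c \<in> fv Y"
        unfolding 2(3) using \<open>c \<in> fv X\<close> 2(2) fv_subset_fv_subst[of X a ?S] by blast
      moreover have "tr V Y = tr V X"
        using 2 admissible_SMuD(1)[OF adm] by (simp add: tr_subst)
      ultimately show ?thesis using mu_X \<open>c \<in> V\<close> unfolding admissible_mu_def by metis
    qed
  qed
  moreover have "nonempty_choices (subst a ?S T)"
    using adm by (simp add: admissible_def nonempty_choices_subst)
  moreover have "fv (subst a ?S T) \<inter> V = {}"
    using adm fv_subst_subset[of a ?S T] unfolding admissible_def by auto
  ultimately show ?thesis unfolding admissible_def by fast
qed

lemma admissible_sstep: "sstep S a S' \<Longrightarrow> admissible S \<Longrightarrow> admissible S'"
proof (induction rule: sstep.induct)
  case (s_mu a k T \<alpha> T')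
  then show ?case using admissible_unfold by blast
qed (fastforce simp: admissible_def)+

lemma bstep_tr_iff:
  "admissible S \<Longrightarrow> bstep E (tr V S) a r \<longleftrightarrow> (\<exists>S'. sstep S a S' \<and> tr V S' = r)"
proof (induction "(unfold_depth S, size S)" arbitrary: S r rule: less_induct)
  case less
  show ?case
  proof (cases S)
    case (SMu c k T)
    note mu = admissible_SMuD[OF less.prems[unfolded SMu]]
    obtain X0 where X0: "(c, X0) \<in> M" "tr V T = tr V X0" using mu(4) by blast
    have "bstep E (tr V S) a r \<longleftrightarrow> bstep E (tr V X0) a r"
      using SMu X0(1) bstep_tr_unr[of X0] body_nonempty_choices mus_closed
      by (simp add: bstep_simps equation)
    also have "\<dots> \<longleftrightarrow> bstep E (tr V (subst c S T)) a r"
      using X0(2) mu(1) SMu by (simp add: tr_subst)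
    also have "\<dots> \<longleftrightarrow> (\<exists>S'. sstep (subst c S T) a S' \<and> tr V S' = r)"
      using SMu mu less.prems by (intro less.hyps) (simp_all add: unfold_depth_subst admissible_unfold)
    finally show ?thesis using SMu by (simp add: sstep_simps)
  next
    case (SSeq T U)
    then have "admissible T" "admissible U" using less.prems by simp_all
    moreover have "(unfold_depth T, size T) < (unfold_depth S, size S)"
      and "terminated T \<Longrightarrow> (unfold_depth U, size U) < (unfold_depth S, size S)"
      using SSeq by auto
    ultimately show ?thesis
      using SSeq less.hyps by (auto simp: bstep_odot sstep_simps admissible_tr_eq_PEps_iff)
  qed (use less.prems in \<open>auto simp: admissible_def bstep_simps bstep_bsum_prefixed sstep_simps\<close>)
qed

lemma type_bisim_iff_bisimilar_tr_if_admissible: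
  "admissible T \<Longrightarrow> admissible U \<Longrightarrow> type_bisim T U \<longleftrightarrow> bisimilar (bstep E) (tr V T) (tr V U)"
  unfolding type_bisim_def
  by (rule bisimilar_iff_bisimilar_image[where P = admissible])
    (auto intro: admissible_sstep simp: bstep_tr_iff)

end

definition mu_equations_hold ::
    "'v set \<Rightarrow> ('v \<times> ('b, 'l, 'v) styp) set \<Rightarrow> ('v \<Rightarrow> (('b, 'l, 'v) act, 'v) proc option) \<Rightarrow> bool"
  where "mu_equations_hold V M E \<longleftrightarrow> (\<forall>(c, X) \<in> M. E c = Some (tr V (unr X)))"

lemma type_bisim_iff_bisimilar_tr:
  assumes T: "kinding \<Delta> T \<kappa>" and U: "kinding \<Delta>' U \<kappa>'" and "standing T U"
    and V: "V = set (binders T @ binders U)"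
    and E: "mu_equations_hold V (mus T \<union> mus U) E"
  shows "type_bisim T U \<longleftrightarrow> bisimilar (bstep E) (tr V T) (tr V U)"
proof -
  have binder_free: "\<forall>(c, X) \<in> mus T \<union> mus U. c \<in> fv X"
    and free_not_bound: "V \<inter> (fv T \<union> fv U) = {}"
    using \<open>standing T U\<close> unfolding standing_def V by auto
  interpret translation_system "mus T \<union> mus U" V E
  proof
    fix c X assume cX: "(c, X) \<in> mus T \<union> mus U"
    then show "E c = Some (tr V (unr X))" using E unfolding mu_equations_hold_def by blast
    show "c \<in> fv X" using binder_free cX by blast
    show "nonempty_choices X"
      using cX kinding_nonempty_choices[OF T] kinding_nonempty_choices[OF U]
      by (auto intro: nonempty_choices_mus)
    show "mus X \<subseteq> mus T \<union> mus U" using cX by (auto dest: mus_mus_subset)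
  qed
  have "admissible S" if "S \<in> {T, U}" for S
    unfolding admissible_def admissible_mu_def
    using that free_not_bound binder_free mus_binders
      kinding_nonempty_choices[OF T] kinding_nonempty_choices[OF U]
      kinding_mus_contractive[OF T] kinding_mus_contractive[OF U]
    unfolding V by fastforce
  then show ?thesis by (simp add: type_bisim_iff_bisimilar_tr_if_admissible)
qed

lemma mu_equations_hold_iff_eqs:
  "mu_equations_hold V (mus T \<union> mus U) E \<longleftrightarrow> (\<forall>(X, p) \<in> eqs V T \<union> eqs V U. E X = Some p)"
  unfolding mu_equations_hold_def eqs_def by blast

lemma mu_equations_solvable:
  assumes "distinct (binders T @ binders U)"
  shows "\<exists>E. mu_equations_hold V (mus T \<union> mus U) E"
proof -
  obtain xs ys where "set xs = mus T" "map fst xs = binders T" "set ys = mus U" "map fst ys = binders U"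
    using mus_as_list by metis
  then have "set (xs @ ys) = mus T \<union> mus U" "distinct (map fst (xs @ ys))"
    using assms by simp_all
  then have "map_of (xs @ ys) c = Some X" if "(c, X) \<in> mus T \<union> mus U" for c X
    using that by (metis map_of_is_SomeI)
  then have "mu_equations_hold V (mus T \<union> mus U) (map_option (\<lambda>X. tr V (unr X)) \<circ> map_of (xs @ ys))"
    unfolding mu_equations_hold_def by auto
  then show ?thesis by blast
qed

theorem mainTheorem6:
  fixes T U :: "('b, 'l, 'v) styp" and \<Delta> :: "'v \<Rightarrow> kind option" and m :: kind
  assumes "kinding \<Delta> T m" and "kinding \<Delta> U m" and "standing T U"
  defines "V \<equiv> set (binders T @ binders U)"
  shows "type_bisim T U \<longleftrightarrow>
    (\<exists>Estar. (\<forall>(X, p) \<in> eqs V T \<union> eqs V U. Estar X = Some p) \<and>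
             bisimilar (bstep Estar) (tr V T) (tr V U))"
proof -
  have bisim_iff: "type_bisim T U \<longleftrightarrow> bisimilar (bstep E) (tr V T) (tr V U)"
    if "mu_equations_hold V (mus T \<union> mus U) E" for E
    using assms(1-3) V_def that by (intro type_bisim_iff_bisimilar_tr) simp_all
  obtain E where "mu_equations_hold V (mus T \<union> mus U) E"
    using mu_equations_solvable \<open>standing T U\<close> unfolding standing_def by blast
  then show ?thesis using bisim_iff mu_equations_hold_iff_eqs by blast
qed

end
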